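(* Let $\Sigma$ be a real symmetric positive definite $n\times n$ matrix, and let \[{\operatorname{mr}}_+(\Sigma)=\min\{\operatorname{rank}(\hat\Sigma)\mid \Sigma=\tilde\Sigma+\hat\Sigma,\ \tilde\Sigma\ge 0,\ \hat\Sigma\ge 0,\ \tilde\Sigma\text{ diagonal}\}.\] Then \[{\operatorname{mr}}_+(\Sigma)\ge\min\{\operatorname{trace}(\Sigma^{-1}(\Sigma-D))\mid D\text{ real diagonal},\ \Sigma\ge D\ge 0\}.\]
   Context: $M\ge 0$ means $M$ is positive semidefinite and $A\ge B$ means $A-B\ge0$; all matrices are real symmetric $n\times n$. *)

theory Defs
  imports "HOL-Analysis.Analysis"
begin

definition sym_mat :: "real^'n^'n \<Rightarrow> bool" where
  "sym_mat A \<longleftrightarrow> transpose A = A"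

definition psd :: "real^'n^'n \<Rightarrow> bool" where
  "psd A \<longleftrightarrow> sym_mat A \<and> (\<forall>x. 0 \<le> x \<bullet> (A *v x))"

definition pd :: "real^'n^'n \<Rightarrow> bool" where
  "pd A \<longleftrightarrow> sym_mat A \<and> (\<forall>x. x \<noteq> 0 \<longrightarrow> 0 < x \<bullet> (A *v x))"

definition diag_mat :: "real^'n^'n \<Rightarrow> bool" where
  "diag_mat A \<longleftrightarrow> (\<forall>i j. i \<noteq> j \<longrightarrow> A $ i $ j = 0)"

definition mr_plus :: "real^'n^'n \<Rightarrow> nat" where
  "mr_plus S = Min {rank H | H T. S = T + H \<and> psd T \<and> psd H \<and> diag_mat T}"

end

theory Submission
  imports Defs
begin

text \<open>
  Take a decomposition \<open>S = T + H\<close> with \<open>T\<close> diagonal, \<open>T, H \<ge> 0\<close> and \<open>rank H = mr\<^sub>+(S)\<close>;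
  then \<open>D = T\<close> is admissible for the infimum and \<open>trace (S\<inverse> (S - D)) = trace (S\<inverse> H)\<close>.
  It remains to show \<open>trace (S\<inverse> H) \<le> rank H\<close> whenever \<open>0 \<le> H \<le> S\<close>. Pick \<open>v\<close> with
  \<open>w = H v \<noteq> 0\<close> and split off the Wedderburn rank-one term \<open>w w\<^sup>T / (v\<^sup>T H v)\<close>: the remainder
  \<open>H'\<close> still satisfies \<open>0 \<le> H' \<le> S\<close>, has smaller rank, and the split-off term contributes
  \<open>w\<^sup>T S\<inverse> w / v\<^sup>T H v \<le> 1\<close> to the trace, by Cauchy-Schwarz for the form of \<open>H\<close> and \<open>H \<le> S\<close>.
\<close>

lemma sym_mat_entry_commute:
  assumes "sym_mat (H::real^'n^'n)"
  shows "H$i$j = H$j$i"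
  using assms unfolding sym_mat_def transpose_def by (metis vec_lambda_beta)

lemma sym_matI:
  assumes "\<And>i j. (H::real^'n^'n)$i$j = H$j$i"
  shows "sym_mat H"
  unfolding sym_mat_def transpose_def using assms by (simp add: vec_eq_iff)

lemma sym_mat_inner_commute:
  assumes "sym_mat H"
  shows "x \<bullet> (H *v y) = y \<bullet> (H *v (x::real^'n))"
proof -
  have "x \<bullet> (H *v y) = (x v* H) \<bullet> y" by (simp add: dot_lmul_matrix)
  also have "x v* H = H *v x" using assms by (metis sym_mat_def transpose_matrix_vector)
  finally show ?thesis by (simp add: inner_commute)
qed

lemma pd_imp_psd: "pd S \<Longrightarrow> psd S"
  unfolding pd_def psd_def by (metis inner_zero_left order_refl less_imp_le)

lemma matrix_mul_matrix_inv_pd: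
  assumes "pd (S::real^'n^'n)"
  shows "S ** matrix_inv S = mat 1"
proof -
  have "\<forall>x. S *v x = 0 \<longrightarrow> x = 0"
    using assms unfolding pd_def by (metis inner_zero_right less_irrefl)
  then obtain B where "B ** S = mat 1" using matrix_left_invertible_ker by blast
  then have "\<exists>B. S ** B = mat 1 \<and> B ** S = mat 1" using matrix_left_right_inverse by blast
  from someI_ex[OF this] show ?thesis unfolding matrix_inv_def by blast
qed

lemma nonneg_quadratic_discriminant:
  fixes a b c :: real
  assumes "0 \<le> b" and nonneg: "\<And>t. 0 \<le> a + 2 * t * c + t\<^sup>2 * b"
  shows "c\<^sup>2 \<le> a * b"
proof (cases "b = 0")
  case True
  have "c = 0"
  proof (rule ccontr)
    assume "c \<noteq> 0"
    then show False using nonneg[of "- (a + 1) / (2 * c)"] True by (simp add: field_simps)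
  qed
  then show ?thesis using True by simp
next
  case False
  with assms(1) have "0 < b" by simp
  have "0 \<le> a + 2 * (- c / b) * c + (- c / b)\<^sup>2 * b" by (rule nonneg)
  also have "\<dots> = (a * b - c\<^sup>2) / b" using \<open>0 < b\<close> by (simp add: field_simps power2_eq_square)
  finally show ?thesis using \<open>0 < b\<close> by (simp add: zero_le_divide_iff)
qed

lemma psd_cauchy_schwarz:
  assumes "psd H"
  shows "(x \<bullet> (H *v y))\<^sup>2 \<le> (x \<bullet> (H *v x)) * (y \<bullet> (H *v (y::real^'n)))"
proof (rule nonneg_quadratic_discriminant)
  show "0 \<le> y \<bullet> (H *v y)" using assms psd_def by blast
next
  fix t :: real
  have "y \<bullet> (H *v x) = x \<bullet> (H *v y)"
    using assms sym_mat_inner_commute unfolding psd_def by metis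
  then have "(x + t *\<^sub>R y) \<bullet> (H *v (x + t *\<^sub>R y)) =
      x \<bullet> (H *v x) + 2 * t * (x \<bullet> (H *v y)) + t\<^sup>2 * (y \<bullet> (H *v y))"
    by (simp add: matrix_vector_right_distrib matrix_vector_mult_scaleR inner_add_left
        inner_add_right algebra_simps power2_eq_square)
  moreover have "0 \<le> (x + t *\<^sub>R y) \<bullet> (H *v (x + t *\<^sub>R y))" using assms psd_def by blast
  ultimately show "0 \<le> x \<bullet> (H *v x) + 2 * t * (x \<bullet> (H *v y)) + t\<^sup>2 * (y \<bullet> (H *v y))"
    by simp
qed

lemma psd_quadratic_form_eq_0_imp:
  assumes "psd H" "v \<bullet> (H *v v) = 0"
  shows "H *v (v::real^'n) = 0"
proof -
  have "((H *v v) \<bullet> (H *v v))\<^sup>2 \<le> 0"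
    using psd_cauchy_schwarz[OF assms(1), of "H *v v" v] assms(2) by simp
  then show ?thesis by simp
qed

lemma outer_matrix_vector_mult:
  "(\<chi> i j. w$i * w$j / b) *v y = ((w \<bullet> y) / b) *\<^sub>R (w::real^'n)"
  by (simp add: vec_eq_iff matrix_vector_mult_def inner_vec_def sum_divide_distrib
      sum_distrib_left algebra_simps)

lemma trace_mult_outer:
  "trace (A ** (\<chi> i j. w$i * w$j / b)) = (w \<bullet> (A *v w)) / (b::real)"
  by (simp add: trace_def matrix_matrix_mult_def inner_vec_def matrix_vector_mult_def
      sum_divide_distrib sum_distrib_left algebra_simps)

text \<open>Wedderburn's rank-one reduction \<open>H - (H v)(H v)\<^sup>T / (v\<^sup>T H v)\<close>; when \<open>v\<^sup>T H v = 0\<close>,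
  division by zero makes it \<open>H\<close> itself.\<close>
definition wedderburn :: "real^'n^'n \<Rightarrow> real^'n \<Rightarrow> real^'n^'n" where
  "wedderburn H v = H - (\<chi> i j. (H *v v)$i * (H *v v)$j / (v \<bullet> (H *v v)))"

lemma wedderburn_mult:
  "wedderburn H v *v y = H *v y - (((H *v v) \<bullet> y) / (v \<bullet> (H *v v))) *\<^sub>R (H *v v)"
  by (simp add: wedderburn_def matrix_vector_mult_diff_rdistrib outer_matrix_vector_mult)

lemma trace_mult_wedderburn:
  "trace (A ** H) =
    trace (A ** wedderburn H v) + ((H *v v) \<bullet> (A *v (H *v v))) / (v \<bullet> (H *v v))"
proof -
  have "A ** H = A ** wedderburn H v + A ** (\<chi> i j. (H *v v)$i * (H *v v)$j / (v \<bullet> (H *v v)))"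
    by (simp add: wedderburn_def flip: matrix_add_ldistrib)
  then show ?thesis
    by (simp add: trace_add trace_mult_outer)
qed

lemma sym_mat_wedderburn:
  assumes "sym_mat H"
  shows "sym_mat (wedderburn H v)"
  by (rule sym_matI) (simp add: wedderburn_def sym_mat_entry_commute[OF assms])

lemma quadratic_form_wedderburn:
  assumes "sym_mat H"
  shows "x \<bullet> (wedderburn H v *v x) = x \<bullet> (H *v x) - (x \<bullet> (H *v v))\<^sup>2 / (v \<bullet> (H *v v))"
  using sym_mat_inner_commute[OF assms, of v x]
  by (simp add: wedderburn_mult inner_diff_right power2_eq_square inner_commute)

lemma psd_wedderburn:
  assumes "psd H"
  shows "psd (wedderburn H v)"
  unfolding psd_def
proof (intro conjI allI)
  show "sym_mat (wedderburn H v)" using assms psd_def sym_mat_wedderburn by blast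
next
  fix x
  have "(x \<bullet> (H *v v))\<^sup>2 / (v \<bullet> (H *v v)) \<le> x \<bullet> (H *v x)"
  proof (cases "v \<bullet> (H *v v) = 0")
    case False
    moreover have "0 \<le> v \<bullet> (H *v v)" using assms psd_def by blast
    ultimately have "0 < v \<bullet> (H *v v)" by simp
    then show ?thesis using psd_cauchy_schwarz[OF assms, of x v] by (simp add: divide_le_eq)
  qed (use assms in \<open>simp add: psd_def\<close>)
  moreover have "sym_mat H" using assms psd_def by blast
  ultimately show "0 \<le> x \<bullet> (wedderburn H v *v x)"
    by (simp add: quadratic_form_wedderburn)
qed

lemma psd_diff_wedderburn:
  assumes "psd H" "psd (S - H)"
  shows "psd (S - wedderburn H v)"
  unfolding psd_def
proof (intro conjI allI)
  have entry: "(S - wedderburn H v)$i$j =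
      (S - H)$i$j + (H *v v)$i * (H *v v)$j / (v \<bullet> (H *v v))" for i j
    by (simp add: wedderburn_def)
  have "(S - H)$i$j = (S - H)$j$i" for i j
    using assms(2) psd_def sym_mat_entry_commute by blast
  then show "sym_mat (S - wedderburn H v)"
    by (intro sym_matI) (simp only: entry mult.commute)
next
  fix x
  have "x \<bullet> ((S - wedderburn H v) *v x) =
      x \<bullet> ((S - H) *v x) + (x \<bullet> (H *v v))\<^sup>2 / (v \<bullet> (H *v v))"
    using assms(1) unfolding psd_def
    by (simp add: quadratic_form_wedderburn matrix_vector_mult_diff_rdistrib inner_diff_right)
  also have "\<dots> \<ge> 0" using assms unfolding psd_def by simp
  finally show "0 \<le> x \<bullet> ((S - wedderburn H v) *v x)" .
qed

lemma rank_wedderburn_less: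
  assumes "psd H" "H *v v \<noteq> 0"
  shows "rank (wedderburn H v) < rank H"
proof -
  define w where "w = H *v v"
  define b where "b = v \<bullet> w"
  have "b \<noteq> 0" using psd_quadratic_form_eq_0_imp assms unfolding b_def w_def by blast
  have subspace: "subspace (range ((*v) A))" for A :: "real^'n^'n"
    by (simp add: linear_subspace_image subspace_UNIV matrix_vector_mul_linear)
  have "range ((*v) (wedderburn H v)) \<subseteq> range ((*v) H)"
  proof
    fix z assume "z \<in> range ((*v) (wedderburn H v))"
    then obtain y where "z = wedderburn H v *v y" by blast
    then have "z = H *v (y - ((w \<bullet> y) / b) *\<^sub>R v)"
      by (simp add: wedderburn_mult matrix_vector_mult_diff_distrib matrix_vector_mult_scaleR
          w_def b_def)
    then show "z \<in> range ((*v) H)" by blast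
  qed
  moreover have "w \<notin> range ((*v) (wedderburn H v))"
  proof
    assume "w \<in> range ((*v) (wedderburn H v))"
    then obtain y where y: "w = wedderburn H v *v y" by blast
    have "wedderburn H v *v v = 0"
      using \<open>b \<noteq> 0\<close> by (simp add: wedderburn_mult b_def w_def inner_commute)
    moreover have "b = y \<bullet> (wedderburn H v *v v)"
      using y sym_mat_inner_commute sym_mat_wedderburn assms(1) unfolding b_def psd_def by metis
    ultimately show False using \<open>b \<noteq> 0\<close> by simp
  qed
  moreover have "w \<in> range ((*v) H)" unfolding w_def by blast
  ultimately have "span (range ((*v) (wedderburn H v))) \<subset> span (range ((*v) H))"
    using subspace by (metis span_eq_iff psubsetI)
  then show ?thesis unfolding rank_dim_range by (rule dim_psubset)
qed

lemma inverse_form_le_quadratic_form: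
  assumes S: "pd S" and H: "psd H" "psd (S - H)"
  shows "0 \<le> (H *v v) \<bullet> (matrix_inv S *v (H *v v))"
    and "(H *v v) \<bullet> (matrix_inv S *v (H *v v)) \<le> v \<bullet> (H *v v)"
proof -
  define y where "y = matrix_inv S *v (H *v v)"
  define a where "a = (H *v v) \<bullet> y"
  have Sy: "S *v y = H *v v"
    unfolding y_def matrix_vector_mul_assoc[of S "matrix_inv S"] matrix_mul_matrix_inv_pd[OF S]
    by simp
  have a_eq: "a = y \<bullet> (S *v y)" unfolding a_def Sy by (simp add: inner_commute)
  then show "0 \<le> (H *v v) \<bullet> (matrix_inv S *v (H *v v))"
    using pd_imp_psd[OF S] unfolding psd_def a_def y_def by simp
  then have "0 \<le> a" unfolding a_def y_def .
  have "y \<bullet> (H *v y) \<le> a"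
    using H(2) a_eq unfolding psd_def
    by (simp add: matrix_vector_mult_diff_rdistrib inner_diff_right)
  have "a\<^sup>2 = (y \<bullet> (H *v v))\<^sup>2" unfolding a_def by (simp add: inner_commute)
  also have "\<dots> \<le> (y \<bullet> (H *v y)) * (v \<bullet> (H *v v))" by (rule psd_cauchy_schwarz[OF H(1)])
  also have "\<dots> \<le> a * (v \<bullet> (H *v v))"
    using \<open>y \<bullet> (H *v y) \<le> a\<close> H(1) unfolding psd_def by (simp add: mult_right_mono)
  finally have "a * a \<le> a * (v \<bullet> (H *v v))" by (simp add: power2_eq_square)
  then have "a \<le> v \<bullet> (H *v v)"
    using \<open>0 \<le> a\<close> H(1) unfolding psd_def by (cases "a = 0") auto
  then show "(H *v v) \<bullet> (matrix_inv S *v (H *v v)) \<le> v \<bullet> (H *v v)"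
    unfolding a_def y_def .
qed

lemma trace_inverse_mult_le_rank:
  fixes S H :: "real^'n^'n"
  assumes S: "pd S" and "psd H" "psd (S - H)"
  shows "0 \<le> trace (matrix_inv S ** H) \<and> trace (matrix_inv S ** H) \<le> real (rank H)"
  using assms(2,3)
proof (induction "rank H" arbitrary: H rule: less_induct)
  case less
  show ?case
  proof (cases "H = 0")
    case True
    then show ?thesis by (simp add: trace_def matrix_matrix_mult_def)
  next
    case False
    then obtain v where "H *v v \<noteq> 0" using matrix_eq[of H 0] by auto
    then have "v \<bullet> (H *v v) \<noteq> 0"
      using psd_quadratic_form_eq_0_imp[OF less.prems(1)] by blast
    moreover have "(H *v v) \<bullet> (matrix_inv S *v (H *v v)) \<le> v \<bullet> (H *v v)"
      and "0 \<le> (H *v v) \<bullet> (matrix_inv S *v (H *v v))"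
      using inverse_form_le_quadratic_form[OF S less.prems] by blast+
    ultimately have "0 \<le> (H *v v) \<bullet> (matrix_inv S *v (H *v v)) / (v \<bullet> (H *v v))"
      and "(H *v v) \<bullet> (matrix_inv S *v (H *v v)) / (v \<bullet> (H *v v)) \<le> 1"
      by simp_all
    moreover have "rank (wedderburn H v) < rank H"
      using rank_wedderburn_less[OF less.prems(1) \<open>H *v v \<noteq> 0\<close>] .
    moreover note less.hyps[OF this psd_wedderburn[OF less.prems(1)]
        psd_diff_wedderburn[OF less.prems]]
    ultimately show ?thesis
      using trace_mult_wedderburn[of "matrix_inv S" H v] by linarith
  qed
qed

lemma psd_0: "psd (0::real^'n^'n)"
  by (simp add: psd_def sym_mat_def transpose_def vec_eq_iff)

lemma mr_plus_attained:
  fixes S :: "real^'n^'n"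
  assumes "psd S"
  obtains T H where "S = T + H" "psd T" "psd H" "diag_mat T" "rank H = mr_plus S"
proof -
  define R where "R = {rank H | H T. S = T + H \<and> psd T \<and> psd H \<and> diag_mat (T::real^'n^'n)}"
  have "finite R"
    by (rule finite_subset[of _ "{..CARD('n)}"]) (use rank_bound in \<open>auto simp: R_def\<close>)
  moreover have "rank S \<in> R"
    unfolding R_def using assms psd_0 by (force simp: diag_mat_def)
  ultimately have "mr_plus S \<in> R"
    unfolding mr_plus_def R_def[symmetric] by (intro Min_in) auto
  then show ?thesis using that unfolding R_def by auto
qed

theorem proposition9:
  fixes S :: "real^'n^'n"
  assumes "pd S"
  shows "real (mr_plus S) \<ge>
    Inf {trace (matrix_inv S ** (S - D)) | D. diag_mat D \<and> psd (S - D) \<and> psd D}"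
proof -
  let ?X = "{trace (matrix_inv S ** (S - D)) | D. diag_mat D \<and> psd (S - D) \<and> psd D}"
  obtain T H where TH: "S = T + H" "psd T" "psd H" "diag_mat T" "rank H = mr_plus S"
    using mr_plus_attained pd_imp_psd[OF assms] by metis
  have "S - T = H" using TH(1) by simp
  then have "trace (matrix_inv S ** H) \<in> ?X" using TH(2-4) by force
  moreover have "bdd_below ?X"
  proof (rule bdd_belowI)
    fix x assume "x \<in> ?X"
    then obtain D where "x = trace (matrix_inv S ** (S - D))" "psd (S - D)" "psd D" by blast
    then show "0 \<le> x" using trace_inverse_mult_le_rank[OF assms, of "S - D"] by simp
  qed
  ultimately have "Inf ?X \<le> trace (matrix_inv S ** H)" by (rule cInf_lower)
  also have "\<dots> \<le> real (rank H)"
    using trace_inverse_mult_le_rank[OF assms TH(3)] TH(1,2) by simp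
  finally show ?thesis using TH(5) by simp
qed

end
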